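(* Let $\Gamma$ be a countable discrete group, $\gamma_1\neq\gamma_2\in\Gamma$, $a,b\in\mathbb{C}\setminus\{0\}$, and $f=a\delta_{\gamma_1}+b\delta_{\gamma_2}\in\ell_2(\Gamma)$. If $|a|\neq|b|$, then $\{\lambda(\gamma)f:\gamma\in\Gamma\}$ is a Riesz basis for $\ell_2(\Gamma)$.
   Context: $\lambda$ is the left regular representation of $\Gamma$ on $\ell_2(\Gamma)$, $\lambda(\gamma)\delta_{\gamma'}=\delta_{\gamma\gamma'}$, where $\{\delta_\gamma\}$ is the canonical basis. *)

theory Defs
  imports "HOL-Analysis.Analysis"
begin

text \<open>The group \<Gamma> is modelled as a type 'g of class group_add (written additively,
  not assumed commutative) and countable.\<close>

definition ell2 :: "('g \<Rightarrow> complex) set" where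
  "ell2 = {x. (\<lambda>i. (cmod (x i))\<^sup>2) summable_on UNIV}"

definition l2norm :: "('g \<Rightarrow> complex) \<Rightarrow> real" where
  "l2norm x = sqrt (\<Sum>\<^sub>\<infinity>i. (cmod (x i))\<^sup>2)"

definition delta :: "'g \<Rightarrow> 'g \<Rightarrow> complex" where
  "delta g = (\<lambda>h. if h = g then 1 else 0)"

text \<open>Left regular representation: (lreg \<gamma> x)(h) = x(\<gamma>\<inverse> h), so lreg \<gamma> (delta \<gamma>') = delta (\<gamma> \<gamma>').\<close>
definition lreg :: "'g::group_add \<Rightarrow> ('g \<Rightarrow> complex) \<Rightarrow> ('g \<Rightarrow> complex)" where
  "lreg \<gamma> x = (\<lambda>h. x (- \<gamma> + h))"

definition riesz_basis :: "('i \<Rightarrow> 'g \<Rightarrow> complex) \<Rightarrow> bool" where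
  "riesz_basis F \<longleftrightarrow>
     (\<forall>k. F k \<in> ell2) \<and>
     (\<forall>x\<in>ell2. \<forall>e>0. \<exists>S c. finite S \<and>
         l2norm (\<lambda>i. x i - (\<Sum>k\<in>S. c k * F k i)) < e) \<and>
     (\<exists>A B. 0 < A \<and> 0 < B \<and>
        (\<forall>S c. finite S \<longrightarrow>
           A * (\<Sum>k\<in>S. (cmod (c k))\<^sup>2) \<le> (l2norm (\<lambda>i. \<Sum>k\<in>S. c k * F k i))\<^sup>2 \<and>
           (l2norm (\<lambda>i. \<Sum>k\<in>S. c k * F k i))\<^sup>2 \<le> B * (\<Sum>k\<in>S. (cmod (c k))\<^sup>2)))"

end

theory Submission
  imports Defs
begin

(* For finitely supported coefficients c, the sum of the c k \<lambda>(k) f is a c(. - \<gamma>1) + b c(. - \<gamma>2), a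
  combination of two translates of c, so its l2 norm lies between ||a| - |b|| \<parallel>c\<parallel> and (|a| + |b|) \<parallel>c\<parallel>:
  these are the Riesz bounds. For completeness let |b| < |a| (otherwise exchange the two terms of f).
  Along the chain g_n = g + n (- \<gamma>1 + \<gamma>2) we have \<lambda>(g_n - \<gamma>1) f = a \<delta>(g_n) + b \<delta>(g_(n+1)), so
  the combination of these translates with coefficients (-b/a)^n / a, n < N, telescopes to
  \<delta>(g) - (-b/a)^N \<delta>(g_N). Hence every \<delta>(g), and with it all of l2, lies in the closed span. *)

lemma l2norm_nonneg [simp]: "0 \<le> l2norm x"
  by (simp add: l2norm_def infsum_nonneg)

lemma L2_set_le_l2norm:
  assumes "x \<in> ell2" "finite F"
  shows "L2_set (\<lambda>i. cmod (x i)) F \<le> l2norm x"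
proof -
  have "(\<Sum>i\<in>F. (cmod (x i))\<^sup>2) \<le> (\<Sum>\<^sub>\<infinity>i. (cmod (x i))\<^sup>2)"
    by (rule finite_sum_le_infsum) (use assms in \<open>auto simp: ell2_def\<close>)
  then show ?thesis unfolding L2_set_def l2norm_def by simp
qed

lemma ell2_if_L2_set_bounded:
  assumes "\<And>F. finite F \<Longrightarrow> L2_set (\<lambda>i. cmod (x i)) F \<le> C"
  shows "x \<in> ell2" and "l2norm x \<le> C"
proof -
  have "0 \<le> C" using assms[of "{}"] by simp
  have sum_bounded: "(\<Sum>i\<in>F. (cmod (x i))\<^sup>2) \<le> C\<^sup>2" if "finite F" for F
  proof -
    have "(L2_set (\<lambda>i. cmod (x i)) F)\<^sup>2 \<le> C\<^sup>2"
      by (rule power_mono) (use assms that in auto)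
    then show ?thesis by (simp add: L2_set_def sum_nonneg)
  qed
  then have summable: "(\<lambda>i. (cmod (x i))\<^sup>2) summable_on UNIV"
    by (intro nonneg_bdd_above_summable_on) (auto simp: bdd_above_def)
  then show "x \<in> ell2" by (simp add: ell2_def)
  have "(\<Sum>\<^sub>\<infinity>i. (cmod (x i))\<^sup>2) \<le> C\<^sup>2"
    by (rule infsum_le_finite_sums[OF summable]) (use sum_bounded in auto)
  with \<open>0 \<le> C\<close> show "l2norm x \<le> C"
    unfolding l2norm_def by (metis real_sqrt_le_mono real_sqrt_abs abs_of_nonneg)
qed

lemma ell2_finite_support:
  assumes "finite U" "\<And>h. h \<notin> U \<Longrightarrow> x h = 0"
  shows "x \<in> ell2" and "l2norm x = L2_set (\<lambda>i. cmod (x i)) U"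
proof -
  have "(\<lambda>i. (cmod (x i))\<^sup>2) summable_on UNIV \<longleftrightarrow> (\<lambda>i. (cmod (x i))\<^sup>2) summable_on U"
    by (rule summable_on_cong_neutral) (use assms in auto)
  then show "x \<in> ell2" using assms(1) by (simp add: ell2_def)
  have "(\<Sum>\<^sub>\<infinity>i. (cmod (x i))\<^sup>2) = infsum (\<lambda>i. (cmod (x i))\<^sup>2) U"
    by (rule infsum_cong_neutral) (use assms in auto)
  then show "l2norm x = L2_set (\<lambda>i. cmod (x i)) U"
    using assms(1) by (simp add: l2norm_def L2_set_def)
qed

lemma L2_set_norm_add_le:
  fixes u v :: "'a \<Rightarrow> 'b::real_normed_vector"
  shows "L2_set (\<lambda>i. norm (u i + v i)) A \<le> L2_set (\<lambda>i. norm (u i)) A + L2_set (\<lambda>i. norm (v i)) A"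
proof -
  have "L2_set (\<lambda>i. norm (u i + v i)) A \<le> L2_set (\<lambda>i. norm (u i) + norm (v i)) A"
    by (rule L2_set_mono) (auto simp: norm_triangle_ineq)
  also have "\<dots> \<le> L2_set (\<lambda>i. norm (u i)) A + L2_set (\<lambda>i. norm (v i)) A"
    by (rule L2_set_triangle_ineq)
  finally show ?thesis .
qed

lemma L2_set_norm_add_ge:
  fixes u v :: "'a \<Rightarrow> 'b::real_normed_vector"
  shows "L2_set (\<lambda>i. norm (u i)) A - L2_set (\<lambda>i. norm (v i)) A \<le> L2_set (\<lambda>i. norm (u i + v i)) A"
  using L2_set_norm_add_le[of "\<lambda>i. u i + v i" "\<lambda>i. - v i" A] by simp

lemma L2_set_norm_scale:
  "L2_set (\<lambda>i. cmod (c * u i)) A = cmod c * L2_set (\<lambda>i. cmod (u i)) A"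
  by (simp add: L2_set_right_distrib norm_mult)

lemma
  assumes "x \<in> ell2" "y \<in> ell2"
  shows ell2_add: "(\<lambda>i. x i + y i) \<in> ell2"
    and l2norm_add_le: "l2norm (\<lambda>i. x i + y i) \<le> l2norm x + l2norm y"
proof -
  have "L2_set (\<lambda>i. cmod (x i + y i)) F \<le> l2norm x + l2norm y" if "finite F" for F
    using L2_set_norm_add_le[of x y F] L2_set_le_l2norm[OF assms(1) that]
      L2_set_le_l2norm[OF assms(2) that] by linarith
  then show "(\<lambda>i. x i + y i) \<in> ell2" "l2norm (\<lambda>i. x i + y i) \<le> l2norm x + l2norm y"
    by (fact ell2_if_L2_set_bounded)+
qed

lemma
  assumes "x \<in> ell2"
  shows ell2_scale: "(\<lambda>i. c * x i) \<in> ell2"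
    and l2norm_scale_le: "l2norm (\<lambda>i. c * x i) \<le> cmod c * l2norm x"
proof -
  have "L2_set (\<lambda>i. cmod (c * x i)) F \<le> cmod c * l2norm x" if "finite F" for F
    using L2_set_le_l2norm[OF assms that] by (simp add: L2_set_norm_scale mult_left_mono)
  then show "(\<lambda>i. c * x i) \<in> ell2" "l2norm (\<lambda>i. c * x i) \<le> cmod c * l2norm x"
    by (fact ell2_if_L2_set_bounded)+
qed

lemma ell2_sum:
  assumes "finite I" "\<And>j. j \<in> I \<Longrightarrow> x j \<in> ell2"
  shows "(\<lambda>i. \<Sum>j\<in>I. x j i) \<in> ell2"
  using assms
proof (induction I rule: finite_induct)
  case empty
  show ?case using ell2_finite_support(1)[of "{}" "\<lambda>i. \<Sum>j\<in>{}. x j i"] by simp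
next
  case (insert j I)
  then show ?case using ell2_add[of "x j" "\<lambda>i. \<Sum>j\<in>I. x j i"] by simp
qed

lemma l2norm_sum_le:
  assumes "finite I" "\<And>j. j \<in> I \<Longrightarrow> x j \<in> ell2"
  shows "l2norm (\<lambda>i. \<Sum>j\<in>I. x j i) \<le> (\<Sum>j\<in>I. l2norm (x j))"
  using assms
proof (induction I rule: finite_induct)
  case empty
  show ?case using ell2_finite_support(2)[of "{}" "\<lambda>i. \<Sum>j\<in>{}. x j i"] by simp
next
  case (insert j I)
  then show ?case
    using l2norm_add_le[of "x j" "\<lambda>i. \<Sum>j\<in>I. x j i"] ell2_sum[of I x] by simp
qed

lemma ell2_small_tail:
  assumes "x \<in> ell2" "0 < r"
  obtains U where "finite U" "(\<lambda>h. if h \<in> U then 0 else x h) \<in> ell2"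
    "l2norm (\<lambda>h. if h \<in> U then 0 else x h) < r"
proof -
  define f where "f = (\<lambda>i. (cmod (x i))\<^sup>2)"
  have summable: "f summable_on UNIV" using assms(1) by (simp add: ell2_def f_def)
  obtain U where U: "finite U" "dist (sum f U) (infsum f UNIV) \<le> r\<^sup>2 / 2"
    using infsum_finite_approximation[OF summable, of "r\<^sup>2 / 2"] assms(2) by auto
  define t where "t h = (if h \<in> U then 0 else x h)" for h
  have "(\<lambda>i. (cmod (t i))\<^sup>2) summable_on UNIV \<longleftrightarrow> f summable_on (UNIV - U)"
    by (rule summable_on_cong_neutral) (auto simp: t_def f_def)
  then have "t \<in> ell2"
    using summable_on_Diff[OF summable] U(1) by (simp add: ell2_def)
  have "(\<Sum>\<^sub>\<infinity>i. (cmod (t i))\<^sup>2) = infsum f (UNIV - U)"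
    by (rule infsum_cong_neutral) (auto simp: t_def f_def)
  also have "\<dots> = infsum f UNIV - sum f U"
    using infsum_Diff[OF summable] U(1) by simp
  also have "\<dots> \<le> dist (sum f U) (infsum f UNIV)"
    by (simp add: dist_real_def)
  also have "\<dots> < r\<^sup>2"
    using U(2) zero_less_power[OF assms(2), of 2] by linarith
  finally have "l2norm t < r"
    unfolding l2norm_def using assms(2) by (metis real_sqrt_less_mono real_sqrt_abs abs_of_pos)
  with \<open>t \<in> ell2\<close> U(1) show ?thesis using that unfolding t_def by blast
qed

lemma sum_delta:
  assumes "finite U"
  shows "(\<Sum>g\<in>U. c g * delta g i) = (if i \<in> U then c i else 0)"
proof -
  have "(\<Sum>g\<in>U. c g * delta g i) = (\<Sum>g\<in>U. if i = g then c g else 0)"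
    by (rule sum.cong) (auto simp: delta_def)
  then show ?thesis using assms by simp
qed

definition fspan :: "('k \<Rightarrow> 'g \<Rightarrow> complex) \<Rightarrow> ('g \<Rightarrow> complex) set" where
  "fspan F = {y. \<exists>S c. finite S \<and> y = (\<lambda>i. \<Sum>k\<in>S. c k * F k i)}"

lemma fspan_zero: "(\<lambda>i. 0) \<in> fspan F"
  unfolding fspan_def by (auto intro: exI[of _ "{}"])

lemma fspan_base: "(\<lambda>i. \<alpha> * F k i) \<in> fspan F"
  unfolding fspan_def by (auto intro!: exI[of _ "{k}"] exI[of _ "\<lambda>_. \<alpha>"])

lemma fspan_scale:
  assumes "y \<in> fspan F"
  shows "(\<lambda>i. \<alpha> * y i) \<in> fspan F"
proof -
  obtain S c where "finite S" "y = (\<lambda>i. \<Sum>k\<in>S. c k * F k i)"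
    using assms by (auto simp: fspan_def)
  then show ?thesis unfolding fspan_def
    by (auto intro!: exI[of _ S] exI[of _ "\<lambda>k. \<alpha> * c k"] simp: sum_distrib_left mult.assoc)
qed

lemma fspan_add:
  assumes "y \<in> fspan F" "z \<in> fspan F"
  shows "(\<lambda>i. y i + z i) \<in> fspan F"
proof -
  obtain S c T d where S: "finite S" "y = (\<lambda>i. \<Sum>k\<in>S. c k * F k i)"
    and T: "finite T" "z = (\<lambda>i. \<Sum>k\<in>T. d k * F k i)"
    using assms by (auto simp: fspan_def)
  define e where "e k = (if k \<in> S then c k else 0) + (if k \<in> T then d k else 0)" for k
  have "(\<Sum>k\<in>S \<union> T. (if k \<in> S then c k else 0) * F k i) = (\<Sum>k\<in>S. c k * F k i)"
    and "(\<Sum>k\<in>S \<union> T. (if k \<in> T then d k else 0) * F k i) = (\<Sum>k\<in>T. d k * F k i)" for i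
    by (rule sum.mono_neutral_cong_right; use S T in auto)+
  then have "(\<lambda>i. y i + z i) = (\<lambda>i. \<Sum>k\<in>S \<union> T. e k * F k i)"
    by (simp add: S T e_def distrib_right sum.distrib)
  then show ?thesis using S T unfolding fspan_def by blast
qed

lemma fspan_sum:
  assumes "finite I" "\<And>j. j \<in> I \<Longrightarrow> y j \<in> fspan F"
  shows "(\<lambda>i. \<Sum>j\<in>I. y j i) \<in> fspan F"
  using assms
  by (induction I rule: finite_induct) (simp_all add: fspan_zero fspan_add)

lemma fspan_dense_if_deltas_approx:
  assumes x: "x \<in> ell2" and e: "0 < e"
    and deltas: "\<And>g \<epsilon>. 0 < \<epsilon> \<Longrightarrow>
      \<exists>v\<in>fspan F. (\<lambda>i. delta g i - v i) \<in> ell2 \<and> l2norm (\<lambda>i. delta g i - v i) < \<epsilon>"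
  shows "\<exists>w\<in>fspan F. l2norm (\<lambda>i. x i - w i) < e"
proof -
  obtain U where U: "finite U" and t: "(\<lambda>h. if h \<in> U then 0 else x h) \<in> ell2"
    "l2norm (\<lambda>h. if h \<in> U then 0 else x h) < e / 2"
    using ell2_small_tail[OF x, of "e / 2"] e by auto
  define M where "M = 1 + (\<Sum>g\<in>U. cmod (x g))"
  have "0 < M" unfolding M_def by (simp add: sum_nonneg add_pos_nonneg)
  define \<epsilon> where "\<epsilon> = e / (2 * M)"
  have "0 < \<epsilon>" using \<open>0 < M\<close> e by (simp add: \<epsilon>_def)
  then obtain V where V: "\<And>g. V g \<in> fspan F" "\<And>g. (\<lambda>i. delta g i - V g i) \<in> ell2"
    "\<And>g. l2norm (\<lambda>i. delta g i - V g i) < \<epsilon>"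
    using deltas by metis
  define r where "r g i = x g * (delta g i - V g i)" for g i
  have r_ell2: "r g \<in> ell2" for g
    using ell2_scale[OF V(2)] by (simp add: r_def[abs_def])
  have r_small: "l2norm (r g) \<le> cmod (x g) * \<epsilon>" for g
  proof -
    have "l2norm (r g) \<le> cmod (x g) * l2norm (\<lambda>i. delta g i - V g i)"
      using l2norm_scale_le[OF V(2)] by (simp add: r_def[abs_def])
    also have "\<dots> \<le> cmod (x g) * \<epsilon>"
      using V(3)[of g] by (simp add: mult_left_mono)
    finally show ?thesis .
  qed
  define w where "w i = (\<Sum>g\<in>U. x g * V g i)" for i
  have "w \<in> fspan F"
    unfolding w_def[abs_def] by (rule fspan_sum) (use U V(1) fspan_scale in auto)
  have "(\<lambda>i. x i - w i) = (\<lambda>i. (if i \<in> U then 0 else x i) + (\<Sum>g\<in>U. r g i))"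
    using sum_delta[OF U, of x]
    by (auto simp: w_def r_def right_diff_distrib sum_subtractf fun_eq_iff)
  then have "l2norm (\<lambda>i. x i - w i) \<le> l2norm (\<lambda>h. if h \<in> U then 0 else x h) + (\<Sum>g\<in>U. l2norm (r g))"
    using l2norm_add_le[OF t(1) ell2_sum[of U r, OF U r_ell2]] l2norm_sum_le[of U r, OF U r_ell2] by simp
  also have "\<dots> < e / 2 + (\<Sum>g\<in>U. cmod (x g) * \<epsilon>)"
    using t(2) sum_mono[of U "\<lambda>g. l2norm (r g)", OF r_small] by linarith
  also have "(\<Sum>g\<in>U. cmod (x g) * \<epsilon>) = (M - 1) * \<epsilon>"
    by (simp add: M_def sum_distrib_right)
  also have "\<dots> < e / 2"
    using \<open>0 < M\<close> e by (simp add: \<epsilon>_def field_simps)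
  finally show ?thesis using \<open>w \<in> fspan F\<close> by auto
qed

abbreviation two_point :: "complex \<Rightarrow> 'g \<Rightarrow> complex \<Rightarrow> 'g \<Rightarrow> 'g \<Rightarrow> complex" where
  "two_point a g1 b g2 \<equiv> (\<lambda>h. a * delta g1 h + b * delta g2 h)"

lemma lreg_delta: "lreg k (delta g) = delta (k + g)"
  unfolding lreg_def delta_def by (metis add_minus_cancel minus_add_cancel)

lemma lreg_two_point: "lreg k (two_point a g1 b g2) = two_point a (k + g1) b (k + g2)"
  using lreg_delta[of k] by (simp add: lreg_def fun_eq_iff)

lemma ell2_lreg_two_point: "lreg k (two_point a g1 b g2) \<in> ell2"
  unfolding lreg_two_point by (rule ell2_finite_support(1)[of "{k + g1, k + g2}"]) (auto simp: delta_def)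

lemma sum_delta_translate:
  fixes g :: "'g::group_add"
  assumes "finite S"
  shows "(\<Sum>k\<in>S. c k * delta (k + g) h) = (if h - g \<in> S then c (h - g) else 0)"
proof -
  have "delta (k + g) h = delta k (h - g)" for k
    unfolding delta_def by (metis add_diff_cancel diff_add_cancel)
  then show ?thesis using sum_delta[OF assms, of c "h - g"] by simp
qed

lemma two_point_synthesis:
  fixes g1 g2 :: "'g::group_add"
  assumes "finite S"
  shows "(\<Sum>k\<in>S. c k * lreg k (two_point a g1 b g2) h) =
    a * (if h - g1 \<in> S then c (h - g1) else 0) + b * (if h - g2 \<in> S then c (h - g2) else 0)"
  using sum_delta_translate[OF assms, of c g1 h] sum_delta_translate[OF assms, of c g2 h]
  by (simp add: lreg_two_point algebra_simps sum.distrib flip: sum_distrib_left)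

lemma L2_set_translate:
  fixes g :: "'g::group_add" and c :: "'g \<Rightarrow> 'a::real_normed_vector"
  assumes "finite U" "(\<lambda>k. k + g) ` S \<subseteq> U"
  shows "L2_set (\<lambda>h. norm (if h - g \<in> S then c (h - g) else 0)) U = L2_set (\<lambda>k. norm (c k)) S"
proof -
  have preimage: "h \<in> (\<lambda>k. k + g) ` S" if "h - g \<in> S" for h
    using that by (metis diff_add_cancel imageI)
  have "L2_set (\<lambda>h. norm (if h - g \<in> S then c (h - g) else 0)) U
      = L2_set (\<lambda>h. norm (if h - g \<in> S then c (h - g) else 0)) ((\<lambda>k. k + g) ` S)"
    unfolding L2_set_def
    by (rule arg_cong[where f = sqrt], rule sum.mono_neutral_right)
      (use assms preimage in auto)
  also have "\<dots> = L2_set (\<lambda>k. norm (c k)) S"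
    unfolding L2_set_def by (subst sum.reindex) (auto simp: inj_on_def)
  finally show ?thesis .
qed

lemma two_point_synthesis_bounds:
  fixes g1 g2 :: "'g::group_add" and a b :: complex and c :: "'g \<Rightarrow> complex"
  assumes "finite S"
  defines "y \<equiv> \<lambda>h. \<Sum>k\<in>S. c k * lreg k (two_point a g1 b g2) h"
  shows "\<bar>cmod a - cmod b\<bar> * L2_set (\<lambda>k. cmod (c k)) S \<le> l2norm y"
    and "l2norm y \<le> (cmod a + cmod b) * L2_set (\<lambda>k. cmod (c k)) S"
proof -
  define u where "u h = a * (if h - g1 \<in> S then c (h - g1) else 0)" for h
  define v where "v h = b * (if h - g2 \<in> S then c (h - g2) else 0)" for h
  define U where "U = (\<lambda>k. k + g1) ` S \<union> (\<lambda>k. k + g2) ` S"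
  have "finite U" using assms(1) by (simp add: U_def)
  have y: "y h = u h + v h" for h
    unfolding y_def u_def v_def using two_point_synthesis[OF assms(1)] by simp
  have "y h = 0" if "h \<notin> U" for h
  proof -
    have "h - g1 \<notin> S" "h - g2 \<notin> S"
      using that unfolding U_def by (metis diff_add_cancel image_eqI UnI1 UnI2)+
    then show ?thesis by (simp add: y u_def v_def)
  qed
  then have norm_y: "l2norm y = L2_set (\<lambda>h. cmod (u h + v h)) U"
    using ell2_finite_support(2)[OF \<open>finite U\<close>] by (simp add: y)
  have norm_u: "L2_set (\<lambda>h. cmod (u h)) U = cmod a * L2_set (\<lambda>k. cmod (c k)) S"
    unfolding u_def L2_set_norm_scale using \<open>finite U\<close>
    by (subst L2_set_translate) (auto simp: U_def)
  have norm_v: "L2_set (\<lambda>h. cmod (v h)) U = cmod b * L2_set (\<lambda>k. cmod (c k)) S"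
    unfolding v_def L2_set_norm_scale using \<open>finite U\<close>
    by (subst L2_set_translate) (auto simp: U_def)
  show "\<bar>cmod a - cmod b\<bar> * L2_set (\<lambda>k. cmod (c k)) S \<le> l2norm y"
    using L2_set_norm_add_ge[of u U v] L2_set_norm_add_ge[of v U u]
    by (auto simp: norm_y norm_u norm_v abs_if left_diff_distrib add.commute)
  show "l2norm y \<le> (cmod a + cmod b) * L2_set (\<lambda>k. cmod (c k)) S"
    using L2_set_norm_add_le[of u v U] by (simp add: norm_y norm_u norm_v distrib_right)
qed

lemma two_point_riesz_inequalities:
  fixes g1 g2 :: "'g::group_add" and a b :: complex and c :: "'g \<Rightarrow> complex"
  assumes "finite S"
  defines "y \<equiv> \<lambda>h. \<Sum>k\<in>S. c k * lreg k (two_point a g1 b g2) h"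
  shows "(cmod a - cmod b)\<^sup>2 * (\<Sum>k\<in>S. (cmod (c k))\<^sup>2) \<le> (l2norm y)\<^sup>2 \<and>
    (l2norm y)\<^sup>2 \<le> (cmod a + cmod b)\<^sup>2 * (\<Sum>k\<in>S. (cmod (c k))\<^sup>2)"
proof -
  have L2: "(L2_set (\<lambda>k. cmod (c k)) S)\<^sup>2 = (\<Sum>k\<in>S. (cmod (c k))\<^sup>2)"
    by (simp add: L2_set_def sum_nonneg)
  have "\<bar>cmod a - cmod b\<bar> * L2_set (\<lambda>k. cmod (c k)) S \<le> l2norm y"
    and "l2norm y \<le> (cmod a + cmod b) * L2_set (\<lambda>k. cmod (c k)) S"
    unfolding y_def by (rule two_point_synthesis_bounds[OF assms(1)])+
  then have "(\<bar>cmod a - cmod b\<bar> * L2_set (\<lambda>k. cmod (c k)) S)\<^sup>2 \<le> (l2norm y)\<^sup>2"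
    and "(l2norm y)\<^sup>2 \<le> ((cmod a + cmod b) * L2_set (\<lambda>k. cmod (c k)) S)\<^sup>2"
    by (auto intro!: power_mono)
  then show ?thesis by (simp add: power_mult_distrib L2)
qed

lemma geometric_telescope:
  fixes a b :: "'a::field"
  assumes "a \<noteq> 0" "\<And>n. p n = a * e n + b * e (Suc n)"
  shows "(\<Sum>n<N. ((- b / a) ^ n / a) * p n) = e 0 - (- b / a) ^ N * e N"
proof (induction N)
  case (Suc N)
  have "((- b / a) ^ N / a) * p N = (- b / a) ^ N * e N - (- b / a) ^ Suc N * e (Suc N)"
    using assms by (simp add: field_simps)
  with Suc show ?case by simp
qed simp

lemma delta_approx_by_two_point_translates:
  fixes g1 g2 g :: "'g::group_add"
  assumes "cmod b < cmod a" "0 < \<epsilon>"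
  shows "\<exists>v\<in>fspan (\<lambda>k. lreg k (two_point a g1 b g2)).
    (\<lambda>i. delta g i - v i) \<in> ell2 \<and> l2norm (\<lambda>i. delta g i - v i) < \<epsilon>"
proof -
  have "a \<noteq> 0" using assms(1) by auto
  define q where "q = - b / a"
  have "cmod q < 1" using assms(1) \<open>a \<noteq> 0\<close> by (simp add: q_def norm_divide divide_less_eq)
  then obtain N where N: "cmod q ^ N < \<epsilon>" using real_arch_pow_inv[OF assms(2)] by blast
  define gs where "gs n = ((\<lambda>x. x + (- g1 + g2)) ^^ n) g" for n
  have step: "lreg (gs n - g1) (two_point a g1 b g2) = two_point a (gs n) b (gs (Suc n))" for n
    by (simp add: lreg_two_point gs_def flip: add.assoc)
  define v where "v i = (\<Sum>n<N. (q ^ n / a) * lreg (gs n - g1) (two_point a g1 b g2) i)" for i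
  have "v \<in> fspan (\<lambda>k. lreg k (two_point a g1 b g2))"
    unfolding v_def[abs_def]
    by (rule fspan_sum) (simp, rule fspan_base[of _ "\<lambda>k. lreg k (two_point a g1 b g2)"])
  moreover have "(\<lambda>i. delta g i - v i) = (\<lambda>i. q ^ N * delta (gs N) i)"
  proof
    fix i
    have "v i = delta (gs 0) i - q ^ N * delta (gs N) i"
      unfolding v_def q_def
      by (rule geometric_telescope[OF \<open>a \<noteq> 0\<close>, where e = "\<lambda>n. delta (gs n) i"])
        (simp add: step)
    then show "delta g i - v i = q ^ N * delta (gs N) i"
      by (simp add: gs_def)
  qed
  moreover have "(\<lambda>i. q ^ N * delta (gs N) i) \<in> ell2"
    and "l2norm (\<lambda>i. q ^ N * delta (gs N) i) = cmod q ^ N"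
    using ell2_finite_support[of "{gs N}" "\<lambda>i. q ^ N * delta (gs N) i"]
    by (simp_all add: delta_def norm_power)
  ultimately show ?thesis using N by (auto intro!: bexI[of _ v])
qed

lemma two_point_translates_dense:
  fixes g1 g2 :: "'g::group_add"
  assumes "cmod a \<noteq> cmod b" "x \<in> ell2" "0 < e"
  shows "\<exists>w\<in>fspan (\<lambda>k. lreg k (two_point a g1 b g2)). l2norm (\<lambda>i. x i - w i) < e"
proof (cases "cmod b < cmod a")
  case True
  show ?thesis
    by (rule fspan_dense_if_deltas_approx[OF assms(2,3)])
      (rule delta_approx_by_two_point_translates[OF True])
next
  case False
  then have "cmod a < cmod b" using assms(1) by linarith
  have "\<exists>w\<in>fspan (\<lambda>k. lreg k (two_point b g2 a g1)). l2norm (\<lambda>i. x i - w i) < e"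
    by (rule fspan_dense_if_deltas_approx[OF assms(2,3)])
      (rule delta_approx_by_two_point_translates[OF \<open>cmod a < cmod b\<close>])
  moreover have "two_point b g2 a g1 = two_point a g1 b g2"
    by (simp add: add.commute)
  ultimately show ?thesis by simp
qed

theorem proposition7p5:
  fixes \<gamma>1 \<gamma>2 :: "'g::{group_add, countable}" and a b :: complex
  assumes "\<gamma>1 \<noteq> \<gamma>2" and "a \<noteq> 0" and "b \<noteq> 0"
    and "cmod a \<noteq> cmod b"
  shows "riesz_basis (\<lambda>\<gamma>. lreg \<gamma> (\<lambda>h. a * delta \<gamma>1 h + b * delta \<gamma>2 h))"
  unfolding riesz_basis_def
proof (intro conjI allI ballI impI)
  \<comment> \<open>only \<open>cmod a \<noteq> cmod b\<close> is needed; it makes both Riesz constants positive\<close>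
  fix \<gamma> show "lreg \<gamma> (two_point a \<gamma>1 b \<gamma>2) \<in> ell2"
    by (rule ell2_lreg_two_point)
next
  fix x :: "'g \<Rightarrow> complex" and e :: real
  assume "x \<in> ell2" "0 < e"
  then show "\<exists>S c. finite S \<and> l2norm (\<lambda>i. x i - (\<Sum>k\<in>S. c k * lreg k (two_point a \<gamma>1 b \<gamma>2) i)) < e"
    using two_point_translates_dense[OF assms(4)] unfolding fspan_def by fastforce
next
  have "0 < (cmod a - cmod b)\<^sup>2" "0 < (cmod a + cmod b)\<^sup>2"
    using assms(4) by (auto simp: add_nonneg_eq_0_iff)
  then show "\<exists>A B. 0 < A \<and> 0 < B \<and> (\<forall>S c. finite S \<longrightarrow>
      A * (\<Sum>k\<in>S. (cmod (c k))\<^sup>2) \<le> (l2norm (\<lambda>i. \<Sum>k\<in>S. c k * lreg k (two_point a \<gamma>1 b \<gamma>2) i))\<^sup>2 \<and>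
      (l2norm (\<lambda>i. \<Sum>k\<in>S. c k * lreg k (two_point a \<gamma>1 b \<gamma>2) i))\<^sup>2 \<le> B * (\<Sum>k\<in>S. (cmod (c k))\<^sup>2))"
    using two_point_riesz_inequalities by blast
qed

end
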